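(* Let $\{R_i\}_{i\in I}$ be a family of commutative rings with identity and $R=\prod_{i\in I}R_i$. If $R$ is almost complemented, then each $R_i$ is almost complemented. Conversely, if each $R_i$ is almost complemented and the family $\{R_i\}$ is of bounded nilpotence, then $R$ is almost complemented.
   Context: For a ring $A$, $\mathfrak{N}(A)$ is the nilradical and $\mathrm{reg}(A)$ the set of regular elements. $A$ is complemented if for every $a\in A$ there is $b$ with $ab=0$ and $a+b\in\mathrm{reg}(A)$; $A$ is almost complemented if $A/\mathfrak{N}(A)$ is complemented. A family $\{R_i\}$ is of bounded nilpotence if there is $k\in\mathbb{N}$ with $x^k=0$ for all $i$ and all $x\in\mathfrak{N}(R_i)$. *)

theory Defs
  imports "HOL-Algebra.Algebra"
begin

definition nilradical :: "('a, 'm) ring_scheme \<Rightarrow> 'a set" where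
  "nilradical A = {x \<in> carrier A. \<exists>n::nat. x [^]\<^bsub>A\<^esub> n = \<zero>\<^bsub>A\<^esub>}"

definition reg :: "('a, 'm) ring_scheme \<Rightarrow> 'a set" where
  "reg A = {x \<in> carrier A. \<forall>c \<in> carrier A. x \<otimes>\<^bsub>A\<^esub> c = \<zero>\<^bsub>A\<^esub> \<longrightarrow> c = \<zero>\<^bsub>A\<^esub>}"

definition complemented :: "('a, 'm) ring_scheme \<Rightarrow> bool" where
  "complemented A \<longleftrightarrow> (\<forall>a \<in> carrier A. \<exists>b \<in> carrier A.
      a \<otimes>\<^bsub>A\<^esub> b = \<zero>\<^bsub>A\<^esub> \<and> a \<oplus>\<^bsub>A\<^esub> b \<in> reg A)"

definition almost_complemented :: "('a, 'm) ring_scheme \<Rightarrow> bool" where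
  "almost_complemented A \<longleftrightarrow> complemented (A Quot (nilradical A))"

definition prod_ring :: "'i set \<Rightarrow> ('i \<Rightarrow> ('a, 'm) ring_scheme) \<Rightarrow> ('i \<Rightarrow> 'a) ring" where
  "prod_ring I R = \<lparr> partial_object.carrier = (\<Pi>\<^sub>E i\<in>I. carrier (R i)),
     monoid.mult = (\<lambda>x y. \<lambda>i\<in>I. x i \<otimes>\<^bsub>R i\<^esub> y i),
     monoid.one = (\<lambda>i\<in>I. \<one>\<^bsub>R i\<^esub>),
     ring.zero = (\<lambda>i\<in>I. \<zero>\<^bsub>R i\<^esub>),
     ring.add = (\<lambda>x y. \<lambda>i\<in>I. x i \<oplus>\<^bsub>R i\<^esub> y i) \<rparr>"

definition bounded_nilpotence :: "'i set \<Rightarrow> ('i \<Rightarrow> ('a, 'm) ring_scheme) \<Rightarrow> bool" where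
  "bounded_nilpotence I R \<longleftrightarrow> (\<exists>k::nat. \<forall>i \<in> I. \<forall>x \<in> nilradical (R i). x [^]\<^bsub>R i\<^esub> k = \<zero>\<^bsub>R i\<^esub>)"

end

theory Submission
  imports Defs
begin

text \<open>
  For an ideal \<open>N\<close> of \<open>A\<close>, complementedness of \<open>A/N\<close> is a statement about representatives:
  every \<open>a\<close> has a \<open>b\<close> with \<open>a b \<in> N\<close> such that \<open>(a + b) c \<in> N\<close> forces \<open>c \<in> N\<close>. For \<open>N\<close> the
  nilradical, both conditions can be checked componentwise in a product, except that an element
  of the product is nilpotent only if the nilpotency indices of its components are bounded.
  Embedding a factor as the elements supported at a single index transfers almost
  complementedness from the product to each factor. Conversely, bounded nilpotence makes the
  nilradical of the product the product of the nilradicals, so componentwise choices of \<open>b\<close>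
  assemble to one for the product.
\<close>

lemma nilradicalI: "x \<in> carrier A \<Longrightarrow> x [^]\<^bsub>A\<^esub> (n::nat) = \<zero>\<^bsub>A\<^esub> \<Longrightarrow> x \<in> nilradical A"
  by (auto simp: nilradical_def)

lemma (in cring) nat_pow_add_decomp:
  fixes m n :: nat
  assumes x: "x \<in> carrier R" and y: "y \<in> carrier R"
  shows "\<exists>r\<in>carrier R. \<exists>s\<in>carrier R. (x \<oplus> y) [^] (m + n) = x [^] m \<otimes> r \<oplus> y [^] n \<otimes> s"
proof (induction m arbitrary: n)
  case 0
  show ?case
    by (rule bexI[of _ "(x \<oplus> y) [^] n"], rule bexI[of _ \<zero>]) (use x y in auto)
next
  case (Suc m)
  note IH_m = Suc.IH
  show ?case
  proof (induction n)
    case 0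
    show ?case
      by (rule bexI[of _ \<zero>], rule bexI[of _ "(x \<oplus> y) [^] Suc m"]) (use x y in auto)
  next
    case (Suc n)
    define E where "E = (x \<oplus> y) [^] (m + Suc n)"
    obtain r1 s1 where r1: "r1 \<in> carrier R" and s1: "s1 \<in> carrier R"
      and E1: "E = x [^] m \<otimes> r1 \<oplus> y [^] Suc n \<otimes> s1"
      using IH_m[of "Suc n"] unfolding E_def by blast
    obtain r2 s2 where r2: "r2 \<in> carrier R" and s2: "s2 \<in> carrier R"
      and E2: "E = x [^] Suc m \<otimes> r2 \<oplus> y [^] n \<otimes> s2"
      using Suc.IH unfolding E_def by auto
    have "(x \<oplus> y) [^] (Suc m + Suc n) = E \<otimes> x \<oplus> E \<otimes> y"
      using x y by (simp add: E_def r_distr)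
    also have "\<dots> = (x [^] m \<otimes> r1 \<oplus> y [^] n \<otimes> y \<otimes> s1) \<otimes> x
                   \<oplus> (x [^] m \<otimes> x \<otimes> r2 \<oplus> y [^] n \<otimes> s2) \<otimes> y"
      by (subst (1) E1, subst E2) simp
    also have "\<dots> = (x [^] m \<otimes> x) \<otimes> (r1 \<oplus> r2 \<otimes> y) \<oplus> (y [^] n \<otimes> y) \<otimes> (s1 \<otimes> x \<oplus> s2)"
      using x y r1 r2 s1 s2 nat_pow_closed[OF x, of m] nat_pow_closed[OF y, of n] by algebra
    also have "\<dots> = x [^] Suc m \<otimes> (r1 \<oplus> r2 \<otimes> y) \<oplus> y [^] Suc n \<otimes> (s1 \<otimes> x \<oplus> s2)"
      by simp
    finally show ?case
      using x y r1 r2 s1 s2 by blast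
  qed
qed

lemma (in cring) nilradical_ideal: "ideal (nilradical R) R"
proof (rule idealI)
  show "ring R" by (rule ring_axioms)
  show "subgroup (nilradical R) (add_monoid R)"
  proof (rule add.subgroupI)
    show "nilradical R \<subseteq> carrier R"
      by (auto simp: nilradical_def)
    show "nilradical R \<noteq> {}"
      using nilradicalI[of \<zero> R 1] by auto
  next
    fix a assume "a \<in> nilradical R"
    then obtain n :: nat where a: "a \<in> carrier R" and n: "a [^] n = \<zero>"
      by (auto simp: nilradical_def)
    have "(\<ominus> a) [^] n = (\<ominus> \<one>) [^] n \<otimes> a [^] n"
      using a by (simp add: l_minus flip: nat_pow_distrib)
    with a n show "\<ominus> a \<in> nilradical R"
      by (auto intro: nilradicalI)
  next
    fix a b assume "a \<in> nilradical R" "b \<in> nilradical R"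
    then obtain m n :: nat where a: "a \<in> carrier R" "a [^] m = \<zero>"
      and b: "b \<in> carrier R" "b [^] n = \<zero>"
      by (auto simp: nilradical_def)
    then have "(a \<oplus> b) [^] (m + n) = \<zero>"
      using nat_pow_add_decomp[of a b m n] by auto
    with a b show "a \<oplus> b \<in> nilradical R"
      by (auto intro: nilradicalI)
  qed
next
  fix a x assume "a \<in> nilradical R" "x \<in> carrier R"
  then obtain n :: nat where a: "a \<in> carrier R" "a [^] n = \<zero>" and x: "x \<in> carrier R"
    by (auto simp: nilradical_def)
  then have "(x \<otimes> a) [^] n = \<zero>"
    by (simp add: nat_pow_distrib)
  with a x show "x \<otimes> a \<in> nilradical R" "a \<otimes> x \<in> nilradical R"
    by (auto simp: m_comm intro: nilradicalI)
qed

definition complement_mod :: "('a, 'm) ring_scheme \<Rightarrow> 'a set \<Rightarrow> 'a \<Rightarrow> 'a \<Rightarrow> bool" where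
  "complement_mod A N a b \<longleftrightarrow>
    a \<otimes>\<^bsub>A\<^esub> b \<in> N \<and> (\<forall>c\<in>carrier A. (a \<oplus>\<^bsub>A\<^esub> b) \<otimes>\<^bsub>A\<^esub> c \<in> N \<longrightarrow> c \<in> N)"

lemma (in ideal) complemented_FactRing_iff:
  "complemented (R Quot I) \<longleftrightarrow> (\<forall>a\<in>carrier R. \<exists>b\<in>carrier R. complement_mod R I a b)"
proof -
  have carrier: "carrier (R Quot I) = (\<lambda>a. I +> a) ` carrier R"
    by (auto simp: FactRing_def A_RCOSETS_def')
  have mult: "(I +> a) \<otimes>\<^bsub>R Quot I\<^esub> (I +> b) = I +> (a \<otimes> b)"
    if "a \<in> carrier R" "b \<in> carrier R" for a b
    using that by (simp add: FactRing_def rcoset_mult_add)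
  have add: "(I +> a) \<oplus>\<^bsub>R Quot I\<^esub> (I +> b) = I +> (a \<oplus> b)"
    if "a \<in> carrier R" "b \<in> carrier R" for a b
    using that by (simp add: FactRing_def a_rcos_sum)
  have zero: "\<zero>\<^bsub>R Quot I\<^esub> = I"
    by (simp add: FactRing_def)
  have coset_eq_zero: "I +> a = I \<longleftrightarrow> a \<in> I" if "a \<in> carrier R" for a
    using that rcos_const_imp_mem a_rcos_const by blast
  have reg: "I +> a \<in> reg (R Quot I) \<longleftrightarrow> (\<forall>c\<in>carrier R. a \<otimes> c \<in> I \<longrightarrow> c \<in> I)"
    if "a \<in> carrier R" for a
    using that by (auto simp: reg_def carrier mult zero coset_eq_zero)
  show ?thesis
    unfolding complemented_def complement_mod_def carrier
    by (auto simp: mult add zero coset_eq_zero reg)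
qed

lemma almost_complemented_iff:
  assumes "cring A"
  shows "almost_complemented A \<longleftrightarrow>
    (\<forall>a\<in>carrier A. \<exists>b\<in>carrier A. complement_mod A (nilradical A) a b)"
  unfolding almost_complemented_def
  by (rule ideal.complemented_FactRing_iff[OF cring.nilradical_ideal[OF assms]])

lemma prod_ring_simps:
  "carrier (prod_ring I R) = (\<Pi>\<^sub>E i\<in>I. carrier (R i))"
  "x \<otimes>\<^bsub>prod_ring I R\<^esub> y = (\<lambda>i\<in>I. x i \<otimes>\<^bsub>R i\<^esub> y i)"
  "x \<oplus>\<^bsub>prod_ring I R\<^esub> y = (\<lambda>i\<in>I. x i \<oplus>\<^bsub>R i\<^esub> y i)"
  "\<one>\<^bsub>prod_ring I R\<^esub> = (\<lambda>i\<in>I. \<one>\<^bsub>R i\<^esub>)"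
  "\<zero>\<^bsub>prod_ring I R\<^esub> = (\<lambda>i\<in>I. \<zero>\<^bsub>R i\<^esub>)"
  by (simp_all add: prod_ring_def)

lemma prod_ring_nat_pow: "x [^]\<^bsub>prod_ring I R\<^esub> (n::nat) = (\<lambda>i\<in>I. x i [^]\<^bsub>R i\<^esub> n)"
  by (induction n) (auto simp: prod_ring_simps)

lemma cring_prod_ring:
  assumes "\<forall>i\<in>I. cring (R i)"
  shows "cring (prod_ring I R)"
proof (rule cringI)
  show "abelian_group (prod_ring I R)"
  proof (rule abelian_groupI)
    fix x assume "x \<in> carrier (prod_ring I R)"
    then show "\<exists>y\<in>carrier (prod_ring I R). y \<oplus>\<^bsub>prod_ring I R\<^esub> x = \<zero>\<^bsub>prod_ring I R\<^esub>"
      by (intro bexI[of _ "\<lambda>i\<in>I. \<ominus>\<^bsub>R i\<^esub> x i"])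
        (use assms in \<open>auto simp: prod_ring_simps fun_eq_iff PiE_iff intro: cring.cring_simprules\<close>)
  qed (use assms in \<open>auto simp: prod_ring_simps fun_eq_iff PiE_iff
        intro: cring.cring_simprules extensional_arb[symmetric]\<close>)
  show "comm_monoid (prod_ring I R)"
    by (rule comm_monoidI)
      (use assms in \<open>auto simp: prod_ring_simps fun_eq_iff PiE_iff
        intro: cring.cring_simprules extensional_arb[symmetric]\<close>)
qed (use assms in \<open>auto simp: prod_ring_simps fun_eq_iff PiE_iff intro: cring.cring_simprules\<close>)

lemma nilradical_prod_ring_subset:
  "nilradical (prod_ring I R) \<subseteq> (\<Pi>\<^sub>E i\<in>I. nilradical (R i))"
  by (auto simp: nilradical_def prod_ring_nat_pow prod_ring_simps fun_eq_iff)

lemma nilradical_prod_ring: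
  assumes "bounded_nilpotence I R"
  shows "nilradical (prod_ring I R) = (\<Pi>\<^sub>E i\<in>I. nilradical (R i))"
proof
  obtain k :: nat where k: "\<And>i x. i \<in> I \<Longrightarrow> x \<in> nilradical (R i) \<Longrightarrow> x [^]\<^bsub>R i\<^esub> k = \<zero>\<^bsub>R i\<^esub>"
    using assms unfolding bounded_nilpotence_def by blast
  show "(\<Pi>\<^sub>E i\<in>I. nilradical (R i)) \<subseteq> nilradical (prod_ring I R)"
  proof
    fix x assume x: "x \<in> (\<Pi>\<^sub>E i\<in>I. nilradical (R i))"
    then have "x [^]\<^bsub>prod_ring I R\<^esub> k = \<zero>\<^bsub>prod_ring I R\<^esub>"
      by (auto simp: prod_ring_nat_pow prod_ring_simps fun_eq_iff intro: k)
    with x show "x \<in> nilradical (prod_ring I R)"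
      by (auto simp: nilradical_def prod_ring_simps)
  qed
qed (rule nilradical_prod_ring_subset)

lemma complement_mod_prod_ring:
  assumes "\<forall>i\<in>I. complement_mod (R i) (N i) (a i) (b i)"
  shows "complement_mod (prod_ring I R) (\<Pi>\<^sub>E i\<in>I. N i) a b"
  unfolding complement_mod_def
proof (intro conjI ballI impI)
  show "a \<otimes>\<^bsub>prod_ring I R\<^esub> b \<in> (\<Pi>\<^sub>E i\<in>I. N i)"
    using assms by (simp add: prod_ring_simps complement_mod_def)
next
  fix c assume c: "c \<in> carrier (prod_ring I R)"
    and abc: "(a \<oplus>\<^bsub>prod_ring I R\<^esub> b) \<otimes>\<^bsub>prod_ring I R\<^esub> c \<in> (\<Pi>\<^sub>E i\<in>I. N i)"
  have "c i \<in> N i" if i: "i \<in> I" for i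
  proof -
    have "(a i \<oplus>\<^bsub>R i\<^esub> b i) \<otimes>\<^bsub>R i\<^esub> c i \<in> N i"
      using PiE_mem[OF abc i] i by (simp add: prod_ring_simps)
    with assms c i show ?thesis
      by (auto simp: complement_mod_def prod_ring_simps)
  qed
  with c show "c \<in> (\<Pi>\<^sub>E i\<in>I. N i)"
    by (auto simp: prod_ring_simps)
qed

definition prod_ring_single :: "'i set \<Rightarrow> ('i \<Rightarrow> ('a, 'm) ring_scheme) \<Rightarrow> 'i \<Rightarrow> 'a \<Rightarrow> 'i \<Rightarrow> 'a"
  where "prod_ring_single I R i a = (\<lambda>j\<in>I. if j = i then a else \<zero>\<^bsub>R j\<^esub>)"

lemma prod_ring_single_apply [simp]: "i \<in> I \<Longrightarrow> prod_ring_single I R i a i = a"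
  by (simp add: prod_ring_single_def)

lemma prod_ring_single_closed:
  assumes "\<forall>j\<in>I. ring (R j)" "i \<in> I" "a \<in> carrier (R i)"
  shows "prod_ring_single I R i a \<in> carrier (prod_ring I R)"
  using assms by (auto simp: prod_ring_single_def prod_ring_simps ring.ring_simprules)

lemma prod_ring_mult_single:
  assumes "\<forall>j\<in>I. ring (R j)" "x \<in> carrier (prod_ring I R)"
  shows "x \<otimes>\<^bsub>prod_ring I R\<^esub> prod_ring_single I R i a = prod_ring_single I R i (x i \<otimes>\<^bsub>R i\<^esub> a)"
  using assms
  by (auto simp: prod_ring_single_def prod_ring_simps fun_eq_iff PiE_iff intro: ring.ring_simprules)

lemma prod_ring_single_in_nilradical:
  assumes "\<forall>j\<in>I. ring (R j)" "i \<in> I" "a \<in> nilradical (R i)"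
  shows "prod_ring_single I R i a \<in> nilradical (prod_ring I R)"
proof -
  obtain n :: nat where a: "a \<in> carrier (R i)" "a [^]\<^bsub>R i\<^esub> n = \<zero>\<^bsub>R i\<^esub>"
    using assms(3) by (auto simp: nilradical_def)
  \<comment> \<open>a positive exponent, so that the zero components vanish too\<close>
  then have "a [^]\<^bsub>R i\<^esub> Suc n = \<zero>\<^bsub>R i\<^esub>"
    using assms(1,2) by (simp add: ring.ring_simprules)
  moreover have "\<zero>\<^bsub>R j\<^esub> [^]\<^bsub>R j\<^esub> Suc n = \<zero>\<^bsub>R j\<^esub>" if "j \<in> I" for j
  proof -
    interpret ring "R j"
      using assms(1) that by blast
    show ?thesis
      by (simp add: nat_pow_zero)
  qed
  ultimately have "prod_ring_single I R i a [^]\<^bsub>prod_ring I R\<^esub> Suc n = \<zero>\<^bsub>prod_ring I R\<^esub>"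
    by (auto simp: prod_ring_single_def prod_ring_nat_pow prod_ring_simps fun_eq_iff)
  with prod_ring_single_closed[OF assms(1,2) a(1)] show ?thesis
    by (rule nilradicalI)
qed

lemma complement_mod_prod_ring_single:
  fixes I :: "'i set" and R :: "'i \<Rightarrow> ('a, 'm) ring_scheme" and P (structure)
  defines "P \<equiv> prod_ring I R"
  assumes rings: "\<forall>j\<in>I. ring (R j)" and i: "i \<in> I" and a: "a \<in> carrier (R i)"
    and y: "y \<in> carrier P" and compl: "complement_mod P (nilradical P) (prod_ring_single I R i a) y"
  shows "complement_mod (R i) (nilradical (R i)) a (y i)"
  unfolding complement_mod_def
proof (intro conjI ballI impI)
  let ?e = "prod_ring_single I R i"
  have component: "x i \<in> nilradical (R i)" if "x \<in> nilradical P" for x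
    using that nilradical_prod_ring_subset i unfolding P_def by blast
  have "?e a \<otimes> y \<in> nilradical P"
    using compl by (simp add: complement_mod_def)
  from component[OF this] i show "a \<otimes>\<^bsub>R i\<^esub> y i \<in> nilradical (R i)"
    by (simp add: P_def prod_ring_simps)
  fix c assume c: "c \<in> carrier (R i)" and ayc: "(a \<oplus>\<^bsub>R i\<^esub> y i) \<otimes>\<^bsub>R i\<^esub> c \<in> nilradical (R i)"
  have "?e a \<oplus> y \<in> carrier P"
    using prod_ring_single_closed[OF rings i a] y rings
    by (auto simp: P_def prod_ring_simps PiE_iff intro: ring.ring_simprules)
  then have "(?e a \<oplus> y) \<otimes> ?e c = ?e ((?e a \<oplus> y) i \<otimes>\<^bsub>R i\<^esub> c)"
    unfolding P_def by (rule prod_ring_mult_single[OF rings])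
  also have "\<dots> = ?e ((a \<oplus>\<^bsub>R i\<^esub> y i) \<otimes>\<^bsub>R i\<^esub> c)"
    using i by (simp add: P_def prod_ring_simps)
  finally have "?e c \<in> nilradical P"
    using compl prod_ring_single_closed[OF rings i c] prod_ring_single_in_nilradical[OF rings i ayc]
    by (simp add: complement_mod_def P_def)
  then show "c \<in> nilradical (R i)"
    using component[of "?e c"] i by simp
qed

lemma almost_complemented_factor:
  assumes cr: "\<forall>j\<in>I. cring (R j)" and ac: "almost_complemented (prod_ring I R)" and i: "i \<in> I"
  shows "almost_complemented (R i)"
  unfolding almost_complemented_iff[OF cr[rule_format, OF i]]
proof
  fix a assume a: "a \<in> carrier (R i)"
  have rings: "\<forall>j\<in>I. ring (R j)"
    using cr cring.axioms(1) by blast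
  obtain y where y: "y \<in> carrier (prod_ring I R)"
    and "complement_mod (prod_ring I R) (nilradical (prod_ring I R)) (prod_ring_single I R i a) y"
    using ac prod_ring_single_closed[OF rings i a]
    unfolding almost_complemented_iff[OF cring_prod_ring[OF cr]] by blast
  then have "complement_mod (R i) (nilradical (R i)) a (y i)"
    by (rule complement_mod_prod_ring_single[OF rings i a])
  moreover have "y i \<in> carrier (R i)"
    using y i by (auto simp: prod_ring_simps)
  ultimately show "\<exists>b\<in>carrier (R i). complement_mod (R i) (nilradical (R i)) a b"
    by blast
qed

lemma almost_complemented_prod_ring:
  assumes cr: "\<forall>i\<in>I. cring (R i)" and ac: "\<forall>i\<in>I. almost_complemented (R i)"
    and bounded: "bounded_nilpotence I R"
  shows "almost_complemented (prod_ring I R)"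
  unfolding almost_complemented_iff[OF cring_prod_ring[OF cr]] nilradical_prod_ring[OF bounded]
proof
  fix a assume "a \<in> carrier (prod_ring I R)"
  then have "\<forall>i\<in>I. \<exists>b\<in>carrier (R i). complement_mod (R i) (nilradical (R i)) (a i) b"
    using ac cr by (auto simp: almost_complemented_iff prod_ring_simps)
  then obtain f where f: "\<forall>i\<in>I. f i \<in> carrier (R i) \<and> complement_mod (R i) (nilradical (R i)) (a i) (f i)"
    by metis
  then have "complement_mod (prod_ring I R) (\<Pi>\<^sub>E i\<in>I. nilradical (R i)) a (restrict f I)"
    by (intro complement_mod_prod_ring) simp
  moreover have "restrict f I \<in> carrier (prod_ring I R)"
    using f by (simp add: prod_ring_simps)
  ultimately show "\<exists>b\<in>carrier (prod_ring I R). complement_mod (prod_ring I R) (\<Pi>\<^sub>E i\<in>I. nilradical (R i)) a b"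
    by blast
qed

theorem mainTheorem9:
  fixes I :: "'i set" and R :: "'i \<Rightarrow> ('a, 'm) ring_scheme"
  assumes "\<forall>i \<in> I. cring (R i)"
  shows "(almost_complemented (prod_ring I R) \<longrightarrow> (\<forall>i \<in> I. almost_complemented (R i)))
    \<and> ((\<forall>i \<in> I. almost_complemented (R i)) \<and> bounded_nilpotence I R
         \<longrightarrow> almost_complemented (prod_ring I R))"
  using almost_complemented_factor[OF assms] almost_complemented_prod_ring[OF assms] by blast

end
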